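(* Let $F \colon Q = I \times J \to \mathbb{W}$ be a horizontal $(M,\epsilon)$-quasi-isometric embedding, where $I,J \subset \mathbb{R}$ are intervals with $|I| > 2M^{2}\sqrt{|J|} + 4M\epsilon$. Then for each fixed $(y_{0},t_{0}) \in Q$, the maps $y \mapsto \pi_{1}(F(y,t_{0}))$ and $t \mapsto \pi_{2}(F(y_{0},t))$ are $(M,2\epsilon)$-quasi-isometric embeddings $(I,|\cdot|) \to (\mathbb{R},|\cdot|)$ and $(J,\|\cdot\|) \to (\mathbb{R},\|\cdot\|)$, respectively.
   Context: $\mathbb{W}$ is $\mathbb{R}^{2}$ with the metric $d_{\mathrm{par}}((y,t),(\xi,\tau)) = \max\{|y-\xi|,|t-\tau|^{1/2}\}$; $\pi_{1}(y,t) = y$, $\pi_{2}(y,t) = t$; horizontal lines in $\mathbb{W}$ are the sets $\mathbb{R} \times \{t\}$. $\|x-y\| := \sqrt{|x-y|}$ is the square root metric on $\mathbb{R}$. A map $F \colon (X,d) \to (Y,d')$ is an $(M,\epsilon)$-quasi-isometric embedding if $M^{-1}d(x,y) - \epsilon \leq d'(F(x),F(y)) \leq Md(x,y) + \epsilon$ for all $x,y$. For a rectangle $Q = I \times J$, $F \colon Q \to \mathbb{W}$ is a horizontal $(M,\epsilon)$-quasi-isometric embedding if it is an $(M,\epsilon)$-quasi-isometric embedding w.r.t. $d_{\mathrm{par}}$ and for every $t \in J$ there is a horizontal line $\ell_{t} \subset \mathbb{W}$ with $F(I \times \{t\}) \subset \ell_{t}$. *)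

theory Defs
  imports "HOL-Analysis.Analysis"
begin

text \<open>The parabolic metric on W = R^2.\<close>
definition d_par :: "real \<times> real \<Rightarrow> real \<times> real \<Rightarrow> real" where
  "d_par p q = max \<bar>fst p - fst q\<bar> (sqrt \<bar>snd p - snd q\<bar>)"

definition d_abs :: "real \<Rightarrow> real \<Rightarrow> real" where
  "d_abs x y = \<bar>x - y\<bar>"

definition d_sqrt :: "real \<Rightarrow> real \<Rightarrow> real" where
  "d_sqrt x y = sqrt \<bar>x - y\<bar>"

definition qi_embedding ::
  "('a \<Rightarrow> 'a \<Rightarrow> real) \<Rightarrow> ('b \<Rightarrow> 'b \<Rightarrow> real) \<Rightarrow> real \<Rightarrow> real \<Rightarrow> 'a set \<Rightarrow> ('a \<Rightarrow> 'b) \<Rightarrow> bool" where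
  "qi_embedding d d' M eps S F \<longleftrightarrow>
     (\<forall>x\<in>S. \<forall>y\<in>S. d x y / M - eps \<le> d' (F x) (F y) \<and> d' (F x) (F y) \<le> M * d x y + eps)"

definition horizontal_qi_embedding ::
  "real \<Rightarrow> real \<Rightarrow> real set \<Rightarrow> real set \<Rightarrow> (real \<times> real \<Rightarrow> real \<times> real) \<Rightarrow> bool" where
  "horizontal_qi_embedding M eps I J F \<longleftrightarrow>
     qi_embedding d_par d_par M eps (I \<times> J) F \<and>
     (\<forall>t\<in>J. \<exists>c. F ` (I \<times> {t}) \<subseteq> UNIV \<times> {c})"

definition interval_length :: "real set \<Rightarrow> ereal" where
  "interval_length I = Sup (ereal ` I) - Inf (ereal ` I)"

end

(* F maps each row I x {t} into a horizontal line, on which d_par is the Euclidean distance of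
   the first coordinates; this gives the rows at once, and the upper bound for the columns.
   For the lower bound at heights t, t' compare the rows f = fst (F (-, t)) and
   g = fst (F (-, t')): both are (M, eps)-coarsely Lipschitz and stay within
   D = M sqrt|t - t'| + eps of each other, while the length of I forces f to vary by more than 2D.
   A coarse intermediate value theorem then yields y, y' with |f y - g y'| <= eps, so
   d_par (F (y, t)) (F (y', t')) is at most eps plus the square-root distance of the heights of
   the two rows, and the lower quasi-isometry bound for these two points gives the claim. *)

theory Submission
  imports Defs
begin

lemma abs_diff_le_interval_length:
  assumes "a \<in> I" "b \<in> I"
  shows "ereal \<bar>a - b\<bar> \<le> interval_length I"
proof -
  have "ereal x - ereal y \<le> interval_length I" if "x \<in> I" "y \<in> I" for x y
    unfolding interval_length_def using that by (intro ereal_minus_mono Sup_upper Inf_lower) auto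
  from this[OF assms] this[OF assms(2,1)] show ?thesis
    by (simp add: abs_if)
qed

lemma interval_length_le:
  assumes "\<And>a b. a \<in> I \<Longrightarrow> b \<in> I \<Longrightarrow> \<bar>a - b\<bar> \<le> K"
  shows "interval_length I \<le> ereal K"
proof (cases "I = {}")
  case True
  then show ?thesis by (simp add: interval_length_def bot_ereal_def top_ereal_def)
next
  case False
  then obtain a0 where a0: "a0 \<in> I" by blast
  have near_a0: "a0 - K \<le> a \<and> a \<le> a0 + K" if "a \<in> I" for a
    using assms[OF that a0] by (simp add: abs_le_iff)
  then have "bdd_above I" "bdd_below I"
    by (auto intro!: bdd_aboveI bdd_belowI)
  have "ereal a0 \<le> Sup (ereal ` I)" "Sup (ereal ` I) \<le> ereal (a0 + K)"
    using a0 near_a0 by (auto intro!: Sup_upper Sup_least)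
  then have sup: "Sup (ereal ` I) = ereal (Sup I)"
    by (intro ereal_Sup[symmetric]) auto
  have inf: "Inf (ereal ` I) = ereal (Inf I)"
    using \<open>bdd_below I\<close> False by (simp add: ereal_Inf')
  have "Sup I \<le> b + K" if "b \<in> I" for b
    using False assms[OF _ that] by (intro cSup_least) (force simp: abs_le_iff)+
  then have "Sup I - K \<le> Inf I"
    using False by (intro cInf_greatest) (auto simp: algebra_simps)
  then show ?thesis
    by (simp add: interval_length_def sup inf)
qed

definition coarse_lipschitz_on :: "real set \<Rightarrow> real \<Rightarrow> real \<Rightarrow> (real \<Rightarrow> real) \<Rightarrow> bool" where
  "coarse_lipschitz_on S M eps f \<longleftrightarrow> (\<forall>x\<in>S. \<forall>z\<in>S. \<bar>f x - f z\<bar> \<le> M * \<bar>x - z\<bar> + eps)"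

lemma coarse_lipschitz_onD:
  "coarse_lipschitz_on S M eps f \<Longrightarrow> x \<in> S \<Longrightarrow> z \<in> S \<Longrightarrow> \<bar>f x - f z\<bar> \<le> M * \<bar>x - z\<bar> + eps"
  unfolding coarse_lipschitz_on_def by blast

lemma coarse_lipschitz_on_subset:
  "coarse_lipschitz_on S M eps f \<Longrightarrow> T \<subseteq> S \<Longrightarrow> coarse_lipschitz_on T M eps f"
  unfolding coarse_lipschitz_on_def by blast

lemma coarse_lipschitz_on_uminus:
  "coarse_lipschitz_on S M eps f \<Longrightarrow> coarse_lipschitz_on S M eps (\<lambda>x. - f x)"
  unfolding coarse_lipschitz_on_def by (simp add: abs_minus_commute)

lemma qi_embedding_abs_imp_coarse_lipschitz_on:
  "qi_embedding d_abs d_abs M eps S f \<Longrightarrow> coarse_lipschitz_on S M eps f"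
  unfolding qi_embedding_def coarse_lipschitz_on_def d_abs_def by blast

lemma coarse_IVT_le:
  fixes f :: "real \<Rightarrow> real"
  assumes "a \<le> b" "f a \<le> v" "v \<le> f b" "M \<ge> 0"
    and f: "coarse_lipschitz_on {a..b} M eps f"
  shows "\<exists>y\<in>{a..b}. \<bar>f y - v\<bar> \<le> eps"
proof -
  define S where "S = {y\<in>{a..b}. f y \<le> v}"
  define m where "m = Sup S"
  have "a \<in> S" using assms by (simp add: S_def)
  have "bdd_above S" by (auto simp: S_def intro!: bdd_aboveI[of _ b])
  have "m \<in> {a..b}"
    using \<open>a \<in> S\<close> \<open>bdd_above S\<close> unfolding m_def by (auto intro!: cSup_upper cSup_least simp: S_def)
  \<comment> \<open>A coarsely Lipschitz function jumps by at most eps.\<close>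
  have jump: "c \<le> eps"
    if near: "\<And>d. d > 0 \<Longrightarrow> \<exists>z\<in>{a..b}. \<bar>z - m\<bar> < d \<and> c \<le> \<bar>f z - f m\<bar>" for c
  proof (rule field_le_epsilon)
    fix e :: real assume "e > 0"
    then obtain z where z: "z \<in> {a..b}" "\<bar>z - m\<bar> < e / (M + 1)" "c \<le> \<bar>f z - f m\<bar>"
      using near[of "e / (M + 1)"] \<open>M \<ge> 0\<close> by auto
    have "M * \<bar>z - m\<bar> \<le> (M + 1) * (e / (M + 1))"
      using z(2) \<open>M \<ge> 0\<close> by (intro mult_mono) auto
    then have "M * \<bar>z - m\<bar> \<le> e" using \<open>M \<ge> 0\<close> by simp
    with z coarse_lipschitz_onD[OF f z(1) \<open>m \<in> {a..b}\<close>] show "c \<le> eps + e" by linarith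
  qed
  show ?thesis
  proof (cases "f m \<le> v")
    case True
    have "v - f m \<le> eps"
    proof (cases "m = b")
      case True
      moreover have "0 \<le> eps"
        using coarse_lipschitz_onD[OF f, of a a] \<open>a \<le> b\<close> by simp
      ultimately show ?thesis using \<open>f m \<le> v\<close> \<open>v \<le> f b\<close> by simp
    next
      case False
      show ?thesis
      proof (rule jump)
        fix d :: real assume "d > 0"
        define z where "z = min b (m + d / 2)"
        have "m < z" "z \<in> {a..b}" "\<bar>z - m\<bar> < d"
          using False \<open>m \<in> {a..b}\<close> \<open>d > 0\<close> by (auto simp: z_def)
        moreover have "z \<notin> S"
          using \<open>m < z\<close> \<open>bdd_above S\<close> unfolding m_def by (meson cSup_upper not_le)
        ultimately show "\<exists>z\<in>{a..b}. \<bar>z - m\<bar> < d \<and> v - f m \<le> \<bar>f z - f m\<bar>"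
          by (force simp: S_def)
      qed
    qed
    with True show ?thesis using \<open>m \<in> {a..b}\<close> by force
  next
    case False
    have "f m - v \<le> eps"
    proof (rule jump)
      fix d :: real assume "d > 0"
      then obtain z where "z \<in> S" "m - d < z"
        using less_cSupD[of S "m - d"] \<open>a \<in> S\<close> unfolding m_def by auto
      moreover have "z \<le> m"
        using \<open>z \<in> S\<close> \<open>bdd_above S\<close> unfolding m_def by (rule cSup_upper)
      ultimately show "\<exists>z\<in>{a..b}. \<bar>z - m\<bar> < d \<and> f m - v \<le> \<bar>f z - f m\<bar>"
        by (force simp: S_def)
    qed
    with False show ?thesis using \<open>m \<in> {a..b}\<close> by force
  qed
qed

lemma coarse_IVT:
  fixes f :: "real \<Rightarrow> real"
  assumes I: "is_interval I" and "M \<ge> 0" and f: "coarse_lipschitz_on I M eps f"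
    and "a \<in> I" "b \<in> I" "min (f a) (f b) \<le> v" "v \<le> max (f a) (f b)"
  shows "\<exists>y\<in>I. \<bar>f y - v\<bar> \<le> eps"
  using assms(4-)
proof (induction a b rule: linorder_wlog)
  case (le a b)
  have sub: "{a..b} \<subseteq> I"
    using interval_subset_is_interval[OF I, of a b] le.prems(1,2) by (simp add: cbox_interval)
  with f have f_ab: "coarse_lipschitz_on {a..b} M eps f"
    by (rule coarse_lipschitz_on_subset)
  have "\<exists>y\<in>{a..b}. \<bar>f y - v\<bar> \<le> eps"
  proof (cases "f a \<le> v \<and> v \<le> f b")
    case True
    then show ?thesis using coarse_IVT_le[OF \<open>a \<le> b\<close> _ _ \<open>M \<ge> 0\<close> f_ab] by blast
  next
    case False
    then have "- f a \<le> - v" "- v \<le> - f b" using le.prems by linarith+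
    from coarse_IVT_le[OF \<open>a \<le> b\<close> this \<open>M \<ge> 0\<close> coarse_lipschitz_on_uminus[OF f_ab]]
    show ?thesis by (simp add: abs_minus_commute)
  qed
  with sub show ?case by blast
next
  case (sym a b)
  then show ?case by (metis min.commute max.commute)
qed

lemma coarse_lipschitz_close_functions_meet:
  fixes f g :: "real \<Rightarrow> real"
  assumes I: "is_interval I" and M: "M \<ge> 0"
    and f: "coarse_lipschitz_on I M eps f" and g: "coarse_lipschitz_on I M eps g"
    and close: "\<And>x. x \<in> I \<Longrightarrow> \<bar>f x - g x\<bar> \<le> D"
    and a: "a \<in> I" and b: "b \<in> I" and far: "\<bar>f a - f b\<bar> > 2 * D"
  shows "\<exists>y\<in>I. \<exists>y'\<in>I. \<bar>f y - g y'\<bar> \<le> eps"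
proof -
  have "min (f a) (f b) \<le> g a \<and> g a \<le> max (f a) (f b) \<or>
        min (g a) (g b) \<le> f a \<and> f a \<le> max (g a) (g b)"
    using close[OF a] close[OF b] far unfolding min_def max_def abs_le_iff by (smt (verit))
  then show ?thesis
  proof
    assume "min (f a) (f b) \<le> g a \<and> g a \<le> max (f a) (f b)"
    then show ?thesis using coarse_IVT[OF I M f a b] a by blast
  next
    assume "min (g a) (g b) \<le> f a \<and> f a \<le> max (g a) (g b)"
    then show ?thesis using coarse_IVT[OF I M g a b] a by (metis abs_minus_commute)
  qed
qed

lemma qi_embedding_mono:
  assumes "qi_embedding d d' M eps S F" "eps \<le> eps'"
  shows "qi_embedding d d' M eps' S F"
proof -
  have "a - eps' \<le> a - eps" "b + eps \<le> b + eps'" for a b :: real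
    using \<open>eps \<le> eps'\<close> by auto
  with assms(1) show ?thesis
    unfolding qi_embedding_def by (meson order_trans)
qed

lemma d_par_ge:
  "\<bar>fst p - fst q\<bar> \<le> d_par p q" "sqrt \<bar>snd p - snd q\<bar> \<le> d_par p q"
  by (simp_all add: d_par_def)

lemma d_par_same_snd: "snd p = snd q \<Longrightarrow> d_par p q = \<bar>fst p - fst q\<bar>"
  by (simp add: d_par_def)

lemma d_par_same_fst: "fst p = fst q \<Longrightarrow> d_par p q = sqrt \<bar>snd p - snd q\<bar>"
  by (simp add: d_par_def)

context
  fixes M eps :: real and I J :: "real set" and F :: "real \<times> real \<Rightarrow> real \<times> real"
  assumes F: "horizontal_qi_embedding M eps I J F"
begin

lemma horizontal_qi_embeddingD:
  assumes "p \<in> I \<times> J" "q \<in> I \<times> J"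
  shows "d_par p q / M - eps \<le> d_par (F p) (F q)" "d_par (F p) (F q) \<le> M * d_par p q + eps"
  using F assms unfolding horizontal_qi_embedding_def qi_embedding_def by blast+

lemma horizontal_qi_embedding_snd_eq:
  assumes "y \<in> I" "y' \<in> I" "t \<in> J"
  shows "snd (F (y, t)) = snd (F (y', t))"
proof -
  obtain c where c: "F ` (I \<times> {t}) \<subseteq> UNIV \<times> {c}"
    using F \<open>t \<in> J\<close> unfolding horizontal_qi_embedding_def by blast
  have "F (y, t) \<in> UNIV \<times> {c}" "F (y', t) \<in> UNIV \<times> {c}"
    using c assms by auto
  then show ?thesis by (auto simp: mem_Times_iff)
qed

lemma horizontal_qi_embedding_row:
  assumes "t \<in> J"
  shows "qi_embedding d_abs d_abs M eps I (\<lambda>y. fst (F (y, t)))"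
  unfolding qi_embedding_def d_abs_def
proof (intro ballI)
  fix y y' assume "y \<in> I" "y' \<in> I"
  with assms have "d_par (F (y, t)) (F (y', t)) = \<bar>fst (F (y, t)) - fst (F (y', t))\<bar>"
    by (intro d_par_same_snd horizontal_qi_embedding_snd_eq)
  with horizontal_qi_embeddingD[of "(y, t)" "(y', t)"] \<open>y \<in> I\<close> \<open>y' \<in> I\<close> assms
  show "\<bar>y - y'\<bar> / M - eps \<le> \<bar>fst (F (y, t)) - fst (F (y', t))\<bar> \<and>
        \<bar>fst (F (y, t)) - fst (F (y', t))\<bar> \<le> M * \<bar>y - y'\<bar> + eps"
    by (simp add: d_par_same_snd)
qed

lemma horizontal_qi_embedding_column_upper:
  assumes "y \<in> I" "t \<in> J" "t' \<in> J"
  shows "sqrt \<bar>snd (F (y, t)) - snd (F (y, t'))\<bar> \<le> M * sqrt \<bar>t - t'\<bar> + eps"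
  using d_par_ge(2)[of "F (y, t)" "F (y, t')"] horizontal_qi_embeddingD(2)[of "(y, t)" "(y, t')"] assms
  by (simp add: d_par_same_fst)

lemma horizontal_qi_embedding_rows_meet:
  assumes I: "is_interval I" and "M > 0" and "t \<in> J" "t' \<in> J"
    and "a \<in> I" "b \<in> I" and far: "\<bar>a - b\<bar> > 2 * M\<^sup>2 * sqrt \<bar>t - t'\<bar> + 3 * M * eps"
  shows "\<exists>y\<in>I. \<exists>y'\<in>I. \<bar>fst (F (y, t)) - fst (F (y', t'))\<bar> \<le> eps"
proof -
  define s where "s = sqrt \<bar>t - t'\<bar>"
  have close: "\<bar>fst (F (x, t)) - fst (F (x, t'))\<bar> \<le> M * s + eps" if "x \<in> I" for x
    using d_par_ge(1)[of "F (x, t)" "F (x, t')"] horizontal_qi_embeddingD(2)[of "(x, t)" "(x, t')"]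
      that assms(3,4) by (simp add: d_par_same_fst s_def)
  have "\<bar>a - b\<bar> / M > 2 * (M * s) + 3 * eps"
    using far \<open>M > 0\<close> by (simp add: s_def pos_less_divide_eq power2_eq_square algebra_simps)
  moreover have "\<bar>a - b\<bar> / M - eps \<le> \<bar>fst (F (a, t)) - fst (F (b, t))\<bar>"
    using horizontal_qi_embedding_row[OF \<open>t \<in> J\<close>] assms(5,6) unfolding qi_embedding_def d_abs_def by blast
  ultimately have "\<bar>fst (F (a, t)) - fst (F (b, t))\<bar> > 2 * (M * s + eps)"
    unfolding distrib_left by linarith
  moreover have rows: "coarse_lipschitz_on I M eps (\<lambda>y. fst (F (y, \<tau>)))" if "\<tau> \<in> J" for \<tau>
    using qi_embedding_abs_imp_coarse_lipschitz_on[OF horizontal_qi_embedding_row[OF that]] .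
  ultimately show ?thesis
    using coarse_lipschitz_close_functions_meet[OF I _ rows rows close assms(5,6)] \<open>M > 0\<close> assms(3,4)
    by simp
qed

lemma horizontal_qi_embedding_column_lower:
  assumes "is_interval I" "M > 0" "eps \<ge> 0" "y0 \<in> I" "t \<in> J" "t' \<in> J"
    and "a \<in> I" "b \<in> I" "\<bar>a - b\<bar> > 2 * M\<^sup>2 * sqrt \<bar>t - t'\<bar> + 3 * M * eps"
  shows "sqrt \<bar>t - t'\<bar> / M - 2 * eps \<le> sqrt \<bar>snd (F (y0, t)) - snd (F (y0, t'))\<bar>"
proof -
  obtain y y' where "y \<in> I" "y' \<in> I" and meet: "\<bar>fst (F (y, t)) - fst (F (y', t'))\<bar> \<le> eps"
    using horizontal_qi_embedding_rows_meet assms(1,2,5-) by blast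
  define q where "q = sqrt \<bar>snd (F (y0, t)) - snd (F (y0, t'))\<bar>"
  have "q \<ge> 0" by (simp add: q_def)
  have "sqrt \<bar>t - t'\<bar> / M \<le> d_par (y, t) (y', t') / M"
    using d_par_ge(2)[of "(y, t)" "(y', t')"] \<open>M > 0\<close> by (simp add: divide_right_mono)
  also have "\<dots> \<le> d_par (F (y, t)) (F (y', t')) + eps"
    using horizontal_qi_embeddingD(1)[of "(y, t)" "(y', t')"] \<open>y \<in> I\<close> \<open>y' \<in> I\<close> assms(5,6) by simp
  also have "d_par (F (y, t)) (F (y', t')) = max \<bar>fst (F (y, t)) - fst (F (y', t'))\<bar> q"
    using horizontal_qi_embedding_snd_eq[of y y0] horizontal_qi_embedding_snd_eq[of y' y0]
      \<open>y \<in> I\<close> \<open>y' \<in> I\<close> assms(4-6) by (simp add: d_par_def q_def)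
  also have "\<dots> \<le> eps + q"
    using meet \<open>eps \<ge> 0\<close> \<open>q \<ge> 0\<close> by simp
  finally show ?thesis by (simp add: q_def)
qed

lemma horizontal_qi_embedding_column:
  assumes "is_interval I" "M > 0" "eps \<ge> 0" "y0 \<in> I"
    and diam: "\<And>t t'. t \<in> J \<Longrightarrow> t' \<in> J \<Longrightarrow> \<bar>t - t'\<bar> \<le> L"
    and "a \<in> I" "b \<in> I" "\<bar>a - b\<bar> > 2 * M\<^sup>2 * sqrt L + 3 * M * eps"
  shows "qi_embedding d_sqrt d_sqrt M (2 * eps) J (\<lambda>t. snd (F (y0, t)))"
  unfolding qi_embedding_def d_sqrt_def
proof (intro ballI conjI)
  fix t t' assume "t \<in> J" "t' \<in> J"
  then have "2 * M\<^sup>2 * sqrt \<bar>t - t'\<bar> \<le> 2 * M\<^sup>2 * sqrt L"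
    using diam by (intro mult_left_mono real_sqrt_le_mono) auto
  then have "\<bar>a - b\<bar> > 2 * M\<^sup>2 * sqrt \<bar>t - t'\<bar> + 3 * M * eps"
    using assms(8) by linarith
  then show "sqrt \<bar>t - t'\<bar> / M - 2 * eps \<le> sqrt \<bar>snd (F (y0, t)) - snd (F (y0, t'))\<bar>"
    by (rule horizontal_qi_embedding_column_lower[OF assms(1-4) \<open>t \<in> J\<close> \<open>t' \<in> J\<close> assms(6,7)])
  show "sqrt \<bar>snd (F (y0, t)) - snd (F (y0, t'))\<bar> \<le> M * sqrt \<bar>t - t'\<bar> + 2 * eps"
    using horizontal_qi_embedding_column_upper[OF \<open>y0 \<in> I\<close> \<open>t \<in> J\<close> \<open>t' \<in> J\<close>] \<open>eps \<ge> 0\<close>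
    by linarith
qed

end

theorem lemma3p14:
  fixes M eps :: real and I J :: "real set" and F :: "real \<times> real \<Rightarrow> real \<times> real"
  assumes "M \<ge> 1" and "eps \<ge> 0"
    and "is_interval I" and "is_interval J"
    and "interval_length J < \<infinity>"
    and "interval_length I > ereal (2 * M^2 * sqrt (real_of_ereal (interval_length J)) + 4 * M * eps)"
    and "horizontal_qi_embedding M eps I J F"
    and "y0 \<in> I" and "t0 \<in> J"
  shows "qi_embedding d_abs d_abs M (2 * eps) I (\<lambda>y. fst (F (y, t0))) \<and>
         qi_embedding d_sqrt d_sqrt M (2 * eps) J (\<lambda>t. snd (F (y0, t)))"
proof
  note F = assms(7)
  have "M > 0" using assms(1) by simp
  show "qi_embedding d_abs d_abs M (2 * eps) I (\<lambda>y. fst (F (y, t0)))"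
    using qi_embedding_mono[OF horizontal_qi_embedding_row[OF F assms(9)]] assms(2) by simp
  define L where "L = real_of_ereal (interval_length J)"
  have diam: "\<bar>t - t'\<bar> \<le> L" if "t \<in> J" "t' \<in> J" for t t'
    using abs_diff_le_interval_length[OF that] assms(5)
    unfolding L_def by (cases "interval_length J") auto
  obtain a b where ab: "a \<in> I" "b \<in> I" "\<bar>a - b\<bar> > 2 * M\<^sup>2 * sqrt L + 4 * M * eps"
    using interval_length_le[of I] assms(6) unfolding L_def by (meson leD not_le)
  moreover have "3 * M * eps \<le> 4 * M * eps"
    using \<open>M > 0\<close> assms(2) by (intro mult_right_mono) auto
  ultimately show "qi_embedding d_sqrt d_sqrt M (2 * eps) J (\<lambda>t. snd (F (y0, t)))"
    using horizontal_qi_embedding_column[OF F assms(3) \<open>M > 0\<close> assms(2,8) diam] by simp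
qed

end
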